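(* Let $E=\{x:\langle Ax,x\rangle=1\}$, $A=\operatorname{diag}(1/a_1^2,1/a_2^2)$, and let $P=(p_1,\dots,p_n)$ be an $n$-periodic billiard trajectory in $E$ with angles $\alpha_1,\dots,\alpha_n$, perimeter $L$, and $J=-\langle u_1,Ap_1\rangle$ where $u_1=(p_2-p_1)/|p_2-p_1|$. Then \[\sum_{i=1}^n\cos\alpha_i=JL-n.\]
   Context: An $n$-periodic billiard trajectory in $E$ is a closed polygon $(p_1,\dots,p_n)$ (indices mod $n$) with all $p_i\in E$ obeying the law of reflection at every vertex. The angle $\alpha_i$ is the angle at $p_i$ between the segments $p_ip_{i-1}$ and $p_ip_{i+1}$. *)

theory Defs
  imports "HOL-Analysis.Analysis"
begin

definition diagA :: "real \<Rightarrow> real \<Rightarrow> real \<times> real \<Rightarrow> real \<times> real" where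
  "diagA a1 a2 x = (fst x / a1^2, snd x / a2^2)"

definition ellipse :: "real \<Rightarrow> real \<Rightarrow> (real \<times> real) set" where
  "ellipse a1 a2 = {x. inner (diagA a1 a2 x) x = 1}"

definition vec_angle :: "real \<times> real \<Rightarrow> real \<times> real \<Rightarrow> real" where
  "vec_angle u v = arccos (inner u v / (norm u * norm v))"

definition unit_dir :: "real \<times> real \<Rightarrow> real \<times> real \<Rightarrow> real \<times> real" where
  "unit_dir p q = (1 / norm (q - p)) *\<^sub>R (q - p)"

text \<open>n-periodic billiard trajectory, vertices p i (i :: nat), indices taken mod n
  (encoded by n-periodicity of p). Law of reflection at p i: the outgoing unit
  direction is the mirror image of the incoming one in the tangent line,
  i.e. u_i = u_(i-1) - 2 <u_(i-1), nu> nu with nu the unit normal (A p_i normalised).\<close>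
definition billiard_traj :: "real \<Rightarrow> real \<Rightarrow> nat \<Rightarrow> (nat \<Rightarrow> real \<times> real) \<Rightarrow> bool" where
  "billiard_traj a1 a2 n p \<longleftrightarrow>
     (\<forall>i. p (i + n) = p i) \<and>
     (\<forall>i. p i \<in> ellipse a1 a2) \<and>
     (\<forall>i. p (Suc i) \<noteq> p i) \<and>
     (\<forall>i. let nu = (1 / norm (diagA a1 a2 (p (Suc i)))) *\<^sub>R diagA a1 a2 (p (Suc i));
              uin = unit_dir (p i) (p (Suc i));
              uout = unit_dir (p (Suc i)) (p (Suc (Suc i)))
          in uout = uin - (2 * inner uin nu) *\<^sub>R nu)"

end

theory Submission
  imports Defs
begin

text \<open>
  Write \<open>u\<^sub>i\<close> for the unit direction of the chord from \<open>p\<^sub>i\<close> to \<open>p\<^sub>i\<^sub>+\<^sub>1\<close>.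
  Joachimsthal's integral \<open>-\<langle>u\<^sub>i, A p\<^sub>i\<rangle>\<close> is the same number \<open>J\<close> for every chord: the ellipse
  equation turns it into \<open>\<langle>u\<^sub>i, A p\<^sub>i\<^sub>+\<^sub>1\<rangle>\<close>, and reflection at \<open>p\<^sub>i\<^sub>+\<^sub>1\<close> flips the sign of the
  component along the normal \<open>A p\<^sub>i\<^sub>+\<^sub>1\<close>. Since \<open>cos \<alpha>\<^sub>i\<^sub>+\<^sub>1 = -\<langle>u\<^sub>i, u\<^sub>i\<^sub>+\<^sub>1\<rangle>\<close> and \<open>\<langle>p\<^sub>i\<^sub>+\<^sub>1, A p\<^sub>i\<^sub>+\<^sub>1\<rangle> = 1\<close>,
  the reflection law gives \<open>cos \<alpha>\<^sub>i\<^sub>+\<^sub>1 = J \<langle>p\<^sub>i\<^sub>+\<^sub>1, u\<^sub>i - u\<^sub>i\<^sub>+\<^sub>1\<rangle> - 1\<close>. Summing over a period,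
  \<open>\<langle>p\<^sub>i\<^sub>+\<^sub>1 - p\<^sub>i, u\<^sub>i\<rangle>\<close> contributes the side lengths and the rest telescopes.
\<close>

text \<open>Mirror image of \<open>u\<close> in the hyperplane orthogonal to \<open>a\<close>, written as in the reflection law
  of \<open>billiard_traj\<close>; for \<open>a = 0\<close> it is the identity.\<close>

definition reflect_along :: "'a::real_inner \<Rightarrow> 'a \<Rightarrow> 'a" where
  "reflect_along a u =
     u - (2 * inner u ((1 / norm a) *\<^sub>R a)) *\<^sub>R ((1 / norm a) *\<^sub>R a)"

lemma inner_reflect_along_normal: "inner (reflect_along a u) a = - inner u a"
proof (cases "a = 0")
  case False
  then have "inner a a = norm a * norm a"
    by (simp add: power2_norm_eq_inner[symmetric] power2_eq_square)
  with False show ?thesis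
    by (simp add: reflect_along_def inner_diff_left)
qed (simp add: reflect_along_def)

lemma reflect_along_one_minus_inner:
  assumes "norm u = 1"
  shows "(1 - inner u (reflect_along a u)) * inner x a
           = inner u a * inner x (u - reflect_along a u)"
proof -
  define s where "s = inner u a / norm a"
  have "inner u u = 1"
    using assms by (simp add: power2_norm_eq_inner[symmetric])
  then have "1 - inner u (reflect_along a u) = 2 * s * s"
    by (simp add: reflect_along_def inner_diff_right s_def)
  moreover have "inner x (u - reflect_along a u) = 2 * s * (inner x a / norm a)"
    by (simp add: reflect_along_def s_def)
  moreover have "s * inner x a = inner u a * (inner x a / norm a)"
    by (simp add: s_def)
  ultimately show ?thesis
    by (metis mult.assoc mult.left_commute)
qed

lemma cos_vec_angle:
  assumes "u \<noteq> 0" "v \<noteq> 0"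
  shows "cos (vec_angle u v) = inner u v / (norm u * norm v)"
proof -
  have "norm u * norm v > 0"
    using assms by simp
  moreover have "\<bar>inner u v\<bar> \<le> norm u * norm v"
    by (rule Cauchy_Schwarz_ineq2)
  ultimately have "\<bar>inner u v / (norm u * norm v)\<bar> \<le> 1"
    by (simp add: abs_divide divide_le_eq_1_pos)
  then show ?thesis
    unfolding vec_angle_def by (rule cos_arccos_abs)
qed

lemma cos_vec_angle_opposite_scaleR:
  assumes "s > 0" "t > 0" "norm u = 1" "norm v = 1"
  shows "cos (vec_angle (- (s *\<^sub>R u)) (t *\<^sub>R v)) = - inner u v"
proof -
  have "- (s *\<^sub>R u) \<noteq> 0" "t *\<^sub>R v \<noteq> 0"
    using assms by auto
  then have "cos (vec_angle (- (s *\<^sub>R u)) (t *\<^sub>R v)) = - (s * t * inner u v) / (s * t)"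
    using assms by (simp add: cos_vec_angle)
  also have "\<dots> = - inner u v"
    using assms by simp
  finally show ?thesis .
qed

lemma diagA_inner_commute: "inner (diagA a1 a2 x) y = inner x (diagA a1 a2 y)"
  by (cases x; cases y) (simp add: diagA_def)

lemma ellipse_inner_diagA: "x \<in> ellipse a1 a2 \<Longrightarrow> inner x (diagA a1 a2 x) = 1"
  by (simp add: ellipse_def inner_commute)

lemma inner_unit_dir_diagA_ellipse:
  assumes "p \<in> ellipse a1 a2" "q \<in> ellipse a1 a2"
  shows "inner (unit_dir p q) (diagA a1 a2 q) = - inner (unit_dir p q) (diagA a1 a2 p)"
proof -
  have "inner p (diagA a1 a2 q) = inner q (diagA a1 a2 p)"
    by (metis diagA_inner_commute inner_commute)
  then have "inner (q - p) (diagA a1 a2 q) = - inner (q - p) (diagA a1 a2 p)"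
    using assms by (simp add: ellipse_inner_diagA inner_diff_left)
  then show ?thesis
    by (simp add: unit_dir_def)
qed

lemma scaleR_norm_unit_dir: "p \<noteq> q \<Longrightarrow> norm (q - p) *\<^sub>R unit_dir p q = q - p"
  by (simp add: unit_dir_def)

lemma sum_lessThan_Suc_periodic:
  fixes f :: "nat \<Rightarrow> 'a::ab_group_add"
  assumes "f n = f 0"
  shows "(\<Sum>k<n. f (Suc k)) = (\<Sum>k<n. f k)"
  using sum_lessThan_telescope[of f n] assms by (simp add: sum_subtractf)

context
  fixes a1 a2 :: real and n :: nat and p :: "nat \<Rightarrow> real \<times> real"
  assumes traj: "billiard_traj a1 a2 n p"
begin

lemma billiard_traj_reflect:
  "unit_dir (p (Suc i)) (p (Suc (Suc i)))
     = reflect_along (diagA a1 a2 (p (Suc i))) (unit_dir (p i) (p (Suc i)))"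
  using traj by (simp add: billiard_traj_def reflect_along_def Let_def)

lemma billiard_traj_joachimsthal:
  "inner (unit_dir (p i) (p (Suc i))) (diagA a1 a2 (p i))
     = inner (unit_dir (p 0) (p 1)) (diagA a1 a2 (p 0))"
proof (induction i)
  case (Suc i)
  have "p i \<in> ellipse a1 a2" "p (Suc i) \<in> ellipse a1 a2"
    using traj by (simp_all add: billiard_traj_def)
  then show ?case
    using Suc inner_unit_dir_diagA_ellipse
    by (simp add: billiard_traj_reflect inner_reflect_along_normal)
qed simp

lemma billiard_traj_cos_angle:
  defines "u \<equiv> \<lambda>i. unit_dir (p i) (p (Suc i))"
  shows "cos (vec_angle (p k - p (Suc k)) (p (Suc (Suc k)) - p (Suc k)))
           = - inner (u 0) (diagA a1 a2 (p 0)) * inner (p (Suc k)) (u k - u (Suc k)) - 1"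
proof -
  have distinct: "\<And>i. p (Suc i) \<noteq> p i" and on_ellipse: "\<And>i. p i \<in> ellipse a1 a2"
    using traj by (auto simp: billiard_traj_def)
  have unit: "\<And>i. norm (u i) = 1"
    using distinct by (simp add: u_def unit_dir_def)
  have sides: "\<And>i. p (Suc i) - p i = norm (p (Suc i) - p i) *\<^sub>R u i"
    using distinct by (metis scaleR_norm_unit_dir u_def)
  have "cos (vec_angle (- (norm (p (Suc k) - p k) *\<^sub>R u k))
              (norm (p (Suc (Suc k)) - p (Suc k)) *\<^sub>R u (Suc k))) = - inner (u k) (u (Suc k))"
    using distinct[of k] distinct[of "Suc k"] unit by (simp add: cos_vec_angle_opposite_scaleR)
  then have angle: "cos (vec_angle (p k - p (Suc k)) (p (Suc (Suc k)) - p (Suc k)))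
                      = - inner (u k) (u (Suc k))"
    by (simp only: sides[symmetric] minus_diff_eq)
  have "inner (u k) (diagA a1 a2 (p (Suc k))) = - inner (u 0) (diagA a1 a2 (p 0))"
    using billiard_traj_joachimsthal[of k] inner_unit_dir_diagA_ellipse[OF on_ellipse on_ellipse]
    by (simp add: u_def)
  then have "1 - inner (u k) (u (Suc k))
               = - inner (u 0) (diagA a1 a2 (p 0)) * inner (p (Suc k)) (u k - u (Suc k))"
    using reflect_along_one_minus_inner[OF unit[of k], where x = "p (Suc k)" and a = "diagA a1 a2 (p (Suc k))"]
      ellipse_inner_diagA[OF on_ellipse]
    by (simp add: billiard_traj_reflect u_def)
  with angle show ?thesis
    by simp
qed

lemma billiard_traj_perimeter_telescope:
  defines "u \<equiv> \<lambda>i. unit_dir (p i) (p (Suc i))"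
  shows "(\<Sum>k<n. inner (p (Suc k)) (u k - u (Suc k))) = (\<Sum>k<n. norm (p (Suc k) - p k))"
proof -
  have periodic: "p (k + n) = p k" for k
    using traj by (simp add: billiard_traj_def)
  have side: "inner (p (Suc k)) (u k) = norm (p (Suc k) - p k) + inner (p k) (u k)" for k
  proof -
    have "p (Suc k) \<noteq> p k"
      using traj by (simp add: billiard_traj_def)
    then have "inner (p (Suc k) - p k) (u k) = norm (p (Suc k) - p k)"
      by (simp add: u_def unit_dir_def dot_square_norm power2_eq_square)
    then show ?thesis
      by (simp add: inner_diff_left)
  qed
  have "(\<Sum>k<n. inner (p (Suc k)) (u (Suc k))) = (\<Sum>k<n. inner (p k) (u k))"
    using periodic[of 0] periodic[of 1]
    by (intro sum_lessThan_Suc_periodic) (simp add: u_def)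
  then show ?thesis
    by (simp add: inner_diff_right side sum_subtractf sum.distrib)
qed

end

theorem theorem2p4:
  fixes a1 a2 :: real and n :: nat and p :: "nat \<Rightarrow> real \<times> real"
  assumes "a1 > 0" and "a2 > 0" and "n \<ge> 2"
    and "billiard_traj a1 a2 n p"
  shows "(\<Sum>i=1..n. cos (vec_angle (p (i - 1) - p i) (p (i + 1) - p i)))
         = (- inner (unit_dir (p 1) (p 2)) (diagA a1 a2 (p 1)))
             * (\<Sum>i=1..n. norm (p (i + 1) - p i)) - real n"
proof -
  define u where "u = (\<lambda>i. unit_dir (p i) (p (Suc i)))"
  define J where "J = - inner (u 0) (diagA a1 a2 (p 0))"
  have J_at_1: "J = - inner (unit_dir (p 1) (p 2)) (diagA a1 a2 (p 1))"
    using billiard_traj_joachimsthal[OF assms(4), of 1] by (simp add: J_def u_def numeral_2_eq_2)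
  have "p (0 + n) = p 0" "p (1 + n) = p 1"
    using assms(4) by (simp_all only: billiard_traj_def)
  then have perimeter: "(\<Sum>i=1..n. norm (p (i + 1) - p i)) = (\<Sum>k<n. norm (p (Suc k) - p k))"
    using sum_lessThan_Suc_periodic[of "\<lambda>k. norm (p (Suc k) - p k)" n]
    by (simp add: sum.atLeast1_atMost_eq)
  have "(\<Sum>i=1..n. cos (vec_angle (p (i - 1) - p i) (p (i + 1) - p i)))
      = (\<Sum>k<n. J * inner (p (Suc k)) (u k - u (Suc k)) - 1)"
    using billiard_traj_cos_angle[OF assms(4)] by (simp add: sum.atLeast1_atMost_eq J_def u_def)
  also have "\<dots> = J * (\<Sum>k<n. inner (p (Suc k)) (u k - u (Suc k))) - real n"
    by (simp add: sum_subtractf sum_distrib_left)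
  also have "\<dots> = J * (\<Sum>k<n. norm (p (Suc k) - p k)) - real n"
    using billiard_traj_perimeter_telescope[OF assms(4)] by (simp add: u_def)
  finally show ?thesis
    unfolding J_at_1 perimeter .
qed

end
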